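(* Let $k\ge1$ and suppose $\delta\notin I_k=\{-\frac{p}{2(n+1)}:p\in\{k-1,\dots,2k-2\}\}$. Then the numbers $r(j,k-j)$, $1\le j\le k$, are nonzero, and the operator \[p_k:R^k\to R^k,\qquad p_k=\mathrm{Id}+\sum_{l=1}^kb_{k,l}\,X^l\circ i(\alpha)^l,\qquad b_{k,l}=\Big(\prod_{j=1}^l\big(-r(j,k-j)\big)\Big)^{-1},\] is a projector ($p_k^2=p_k$) whose image is $R^k\cap\ker i(\alpha)$; moreover $i(\alpha)\circ p_k=0$.
   Context: Let $n\ge1$, $M=\mathbb{R}^{2n+1}$ with coordinates $(q^1,\dots,q^n,p^1,\dots,p^n,t)$. For $\mu\in\mathbb{R}$, $\mathcal{S}^k_\mu$ denotes the space of smooth functions $S(x,\xi)$ on $M\times\mathbb{R}^{2n+1}$ homogeneous polynomial of degree $k$ in $\xi=(\xi_{q^1},\dots,\xi_{q^n},\xi_{p^1},\dots,\xi_{p^n},\xi_t)$. Fix $\delta\in\mathbb{R}$ and set $R^k=\mathcal{S}^k_{\delta+\frac{k}{n+1}}$ for $k\ge0$, $R^{j}=0$ for $j<0$. Let $E_s=\sum_i(p^i\partial_{p^i}+q^i\partial_{q^i})$, $\langle E_s,\xi\rangle=\sum_i(p^i\xi_{p^i}+q^i\xi_{q^i})$, $D(S)=\sum_i(\xi_{q^i}\partial_{p^i}S-\xi_{p^i}\partial_{q^i}S)+\xi_tE_s(S)-\langle E_s,\xi\rangle\partial_tS$. Operators: $i(\alpha):R^k\to R^{k-1}$, $i(\alpha)(S)=\frac12\big(\sum_i(p^i\partial_{\xi_{q^i}}S-q^i\partial_{\xi_{p^i}}S)-\partial_{\xi_t}S\big)$;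 $X:R^k\to R^{k+1}$, $X(S)=D(S)+(2(n+1)\delta+k)\xi_tS$. Set $r(l,k)=-\frac{l}{2}\big(2(n+1)\delta+2k+l-1\big)$. *)

theory Defs
  imports "HOL-Analysis.Analysis"
begin

text \<open>Coordinates on M = R^(2n+1) (and on the fibre R^(2n+1) of the cotangent directions)
  are indexed by the finite type  'n + 'n + unit :
  Inl j = q^j,  Inr (Inl j) = p^j,  Inr (Inr ()) = t,  with n = CARD('n).\<close>

type_synonym 'n pt = "real ^ ('n + 'n + unit)"

definition cq :: "'n \<Rightarrow> 'n + 'n + unit" where "cq j = Inl j"
definition cp :: "'n \<Rightarrow> 'n + 'n + unit" where "cp j = Inr (Inl j)"
definition ct :: "'n + 'n + unit" where "ct = Inr (Inr ())"

fun Ck :: "nat \<Rightarrow> ('a::real_normed_vector \<Rightarrow> real) \<Rightarrow> bool" where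
  "Ck 0 f = continuous_on UNIV f"
| "Ck (Suc m) f = ((\<forall>z. f differentiable (at z)) \<and>
                    (\<forall>v. Ck m (\<lambda>z. frechet_derivative f (at z) v)))"

definition smooth :: "('a::real_normed_vector \<Rightarrow> real) \<Rightarrow> bool" where
  "smooth f \<longleftrightarrow> (\<forall>m. Ck m f)"

definition hom_poly :: "nat \<Rightarrow> (real ^ 'i::finite \<Rightarrow> real) \<Rightarrow> bool" where
  "hom_poly k f \<longleftrightarrow> (\<exists>A c. finite A \<and> (\<forall>a\<in>A. (\<Sum>i\<in>UNIV. a i) = k) \<and>
       (\<forall>\<xi>. f \<xi> = (\<Sum>a\<in>A. c a * (\<Prod>i\<in>UNIV. (\<xi> $ i) ^ a i))))"

text \<open>The space S^k_mu (as a set of functions it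
  does not depend on the weight mu), hence R^k = S^k_{delta + k/(n+1)}, and R^j = 0 for j<0
  (the latter is never needed below since all degrees are natural numbers).\<close>
definition Rsp :: "nat \<Rightarrow> ('n::finite pt \<Rightarrow> 'n pt \<Rightarrow> real) set" where
  "Rsp k = {S. smooth (\<lambda>(x, \<xi>). S x \<xi>) \<and> (\<forall>x. hom_poly k (S x))}"

definition dx :: "('n::finite pt \<Rightarrow> 'n pt \<Rightarrow> real) \<Rightarrow> ('n + 'n + unit) \<Rightarrow> 'n pt \<Rightarrow> 'n pt \<Rightarrow> real" where
  "dx S i x \<xi> = deriv (\<lambda>h. S (x + h *\<^sub>R axis i 1) \<xi>) 0"

definition dxi :: "('n::finite pt \<Rightarrow> 'n pt \<Rightarrow> real) \<Rightarrow> ('n + 'n + unit) \<Rightarrow> 'n pt \<Rightarrow> 'n pt \<Rightarrow> real" where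
  "dxi S i x \<xi> = deriv (\<lambda>h. S x (\<xi> + h *\<^sub>R axis i 1)) 0"

definition Es :: "('n::finite pt \<Rightarrow> 'n pt \<Rightarrow> real) \<Rightarrow> 'n pt \<Rightarrow> 'n pt \<Rightarrow> real" where
  "Es S x \<xi> = (\<Sum>j\<in>UNIV. x $ cp j * dx S (cp j) x \<xi> + x $ cq j * dx S (cq j) x \<xi>)"

definition Es_xi :: "'n::finite pt \<Rightarrow> 'n pt \<Rightarrow> real" where
  "Es_xi x \<xi> = (\<Sum>j\<in>UNIV. x $ cp j * \<xi> $ cp j + x $ cq j * \<xi> $ cq j)"

definition Dop :: "('n::finite pt \<Rightarrow> 'n pt \<Rightarrow> real) \<Rightarrow> 'n pt \<Rightarrow> 'n pt \<Rightarrow> real" where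
  "Dop S x \<xi> = (\<Sum>j\<in>UNIV. \<xi> $ cq j * dx S (cp j) x \<xi> - \<xi> $ cp j * dx S (cq j) x \<xi>)
               + \<xi> $ ct * Es S x \<xi> - Es_xi x \<xi> * dx S ct x \<xi>"

definition ialpha :: "('n::finite pt \<Rightarrow> 'n pt \<Rightarrow> real) \<Rightarrow> 'n pt \<Rightarrow> 'n pt \<Rightarrow> real" where
  "ialpha S x \<xi> = (1/2) * ((\<Sum>j\<in>UNIV. x $ cp j * dxi S (cq j) x \<xi> - x $ cq j * dxi S (cp j) x \<xi>)
                           - dxi S ct x \<xi>)"

text \<open>X : R^k -> R^(k+1), X(S) = D(S) + (2(n+1)delta + k) xi_t S; k is the degree of the input.\<close>
definition Xop :: "real \<Rightarrow> nat \<Rightarrow> ('n::finite pt \<Rightarrow> 'n pt \<Rightarrow> real) \<Rightarrow> 'n pt \<Rightarrow> 'n pt \<Rightarrow> real" where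
  "Xop \<delta> k S x \<xi> = Dop S x \<xi> + (2 * (real CARD('n) + 1) * \<delta> + real k) * \<xi> $ ct * S x \<xi>"

text \<open>X^l applied to an element of R^m: X_(m+l-1) o ... o X_(m+1) o X_m.\<close>
fun Xpow :: "real \<Rightarrow> nat \<Rightarrow> nat \<Rightarrow> ('n::finite pt \<Rightarrow> 'n pt \<Rightarrow> real) \<Rightarrow> 'n pt \<Rightarrow> 'n pt \<Rightarrow> real" where
  "Xpow \<delta> m 0 S = S"
| "Xpow \<delta> m (Suc l) S = Xop \<delta> (m + l) (Xpow \<delta> m l S)"

definition rr :: "nat \<Rightarrow> real \<Rightarrow> real \<Rightarrow> real \<Rightarrow> real" where
  "rr n \<delta> l k = - (l / 2) * (2 * (real n + 1) * \<delta> + 2 * k + l - 1)"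

definition bb :: "nat \<Rightarrow> real \<Rightarrow> nat \<Rightarrow> nat \<Rightarrow> real" where
  "bb n \<delta> k l = inverse (\<Prod>j\<in>{1..l}. - rr n \<delta> (real j) (real k - real j))"

definition pk :: "real \<Rightarrow> nat \<Rightarrow> ('n::finite pt \<Rightarrow> 'n pt \<Rightarrow> real) \<Rightarrow> 'n pt \<Rightarrow> 'n pt \<Rightarrow> real" where
  "pk \<delta> k S x \<xi> = S x \<xi> + (\<Sum>l\<in>{1..k}. bb CARD('n) \<delta> k l *
        Xpow \<delta> (k - l) l ((ialpha ^^ l) S) x \<xi>)"

end

theory Submission
  imports Defs
begin

text \<open>Write \<open>i(\<alpha>) = \<Sum>\<^sub>l A\<^sub>l(x) \<partial>\<^sub>\<xi>\<^sub>l\<close> with coefficients affine in \<open>x\<close> and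
  \<open>D = \<Sum>\<^sub>a V\<^sub>a(x,\<xi>) \<partial>\<^sub>x\<^sub>a\<close> with coefficients linear in \<open>\<xi>\<close>. As \<open>x\<close>- and \<open>\<xi>\<close>-derivatives
  commute, \<open>i(\<alpha>) D - D i(\<alpha>)\<close> is again of first order: its \<open>\<partial>\<^sub>x\<close>-part vanishes identically, and
  by Euler's identity its \<open>\<partial>\<^sub>\<xi>\<close>-part is \<open>-m/2 - \<xi>\<^sub>t i(\<alpha>)\<close> on \<open>R\<^sup>m\<close>. Together with
  \<open>i(\<alpha>)(\<xi>\<^sub>t S) = \<xi>\<^sub>t i(\<alpha>) S - S/2\<close> this gives \<open>i(\<alpha>) X = X i(\<alpha>) - ((n+1)\<delta> + m)\<close> on
  \<open>R\<^sup>m\<close>, and by induction \<open>i(\<alpha>) X\<^sup>l = X\<^sup>l i(\<alpha>) + r(l,m) X\<^sup>l\<^sup>-\<^sup>1\<close>.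
  Since \<open>b\<^sub>k\<^sub>,\<^sub>l r(l,k-l) = -b\<^sub>k\<^sub>,\<^sub>l\<^sub>-\<^sub>1\<close>, the sum \<open>i(\<alpha>) p\<^sub>k S\<close> telescopes to a multiple of
  \<open>X\<^sup>k i(\<alpha>)\<^sup>k\<^sup>+\<^sup>1 S = 0\<close>. Since \<open>p\<^sub>k\<close> is the identity on \<open>ker i(\<alpha>)\<close>, it is a projector
  onto \<open>R\<^sup>k \<inter> ker i(\<alpha>)\<close>.\<close>

section \<open>Smooth functions\<close>

lemma frechet_derivative_add:
  assumes "f differentiable (at z)" "g differentiable (at z)"
  shows "frechet_derivative (\<lambda>z. f z + g z) (at z) =
         (\<lambda>v. frechet_derivative f (at z) v + frechet_derivative g (at z) v)"
  by (rule frechet_derivative_at[symmetric])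
     (use assms in \<open>intro has_derivative_add; simp add: frechet_derivative_works\<close>)

lemma frechet_derivative_mult:
  fixes f g :: "'a::real_normed_vector \<Rightarrow> real"
  assumes "f differentiable (at z)" "g differentiable (at z)"
  shows "frechet_derivative (\<lambda>z. f z * g z) (at z) =
         (\<lambda>v. f z * frechet_derivative g (at z) v + frechet_derivative f (at z) v * g z)"
  by (rule frechet_derivative_at[symmetric])
     (use assms in \<open>intro has_derivative_mult; simp add: frechet_derivative_works\<close>)

lemma Ck_SucD: "Ck (Suc m) f \<Longrightarrow> Ck m f"
proof (induction m arbitrary: f)
  case 0
  then show ?case
    by (auto intro!: continuous_at_imp_continuous_on differentiable_imp_continuous_within)
next
  case (Suc m)
  then show ?case by simp
qed

lemma Ck_const: "Ck m (\<lambda>z. c)"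
  by (induction m arbitrary: c) auto

lemma Ck_bounded_linear: "bounded_linear L \<Longrightarrow> Ck m L"
proof (induction m)
  case 0
  then show ?case by (simp add: linear_continuous_on)
next
  case (Suc m)
  have "\<And>z. (L has_derivative L) (at z)"
    using Suc.prems by (rule bounded_linear_imp_has_derivative)
  moreover from this have "\<And>z. frechet_derivative L (at z) = L"
    by (metis frechet_derivative_at)
  ultimately show ?case by (auto simp: differentiable_def Ck_const)
qed

lemma Ck_add: "Ck m f \<Longrightarrow> Ck m g \<Longrightarrow> Ck m (\<lambda>z. f z + g z)"
  by (induction m arbitrary: f g) (auto intro: continuous_intros simp: frechet_derivative_add)

lemma Ck_mult: "Ck m f \<Longrightarrow> Ck m g \<Longrightarrow> Ck m (\<lambda>z. f z * g z :: real)"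
proof (induction m arbitrary: f g)
  case 0
  then show ?case by (auto intro: continuous_intros)
next
  case (Suc m)
  have "Ck m f" "Ck m g" using Suc.prems Ck_SucD by blast+
  with Suc show ?case by (auto simp: frechet_derivative_mult intro!: Ck_add Suc.IH)
qed

lemma smooth_const: "smooth (\<lambda>z. c)"
  by (simp add: smooth_def Ck_const)

lemma smooth_bounded_linear: "bounded_linear L \<Longrightarrow> smooth L"
  by (simp add: smooth_def Ck_bounded_linear)

lemma smooth_add: "smooth f \<Longrightarrow> smooth g \<Longrightarrow> smooth (\<lambda>z. f z + g z)"
  by (simp add: smooth_def Ck_add)

lemma smooth_mult: "smooth f \<Longrightarrow> smooth g \<Longrightarrow> smooth (\<lambda>z. f z * g z :: real)"
  by (simp add: smooth_def Ck_mult)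

lemma smooth_frechet_derivative: "smooth f \<Longrightarrow> smooth (\<lambda>z. frechet_derivative f (at z) v)"
  unfolding smooth_def by (metis Ck.simps(2))

lemma smooth_differentiable: "smooth f \<Longrightarrow> f differentiable (at z)"
  by (auto simp: smooth_def dest: spec[of _ "Suc 0"])

definition smooth_symbol :: "('n::finite pt \<Rightarrow> 'n pt \<Rightarrow> real) \<Rightarrow> bool" where
  "smooth_symbol S \<longleftrightarrow> smooth (\<lambda>z. S (fst z) (snd z))"

lemma smooth_symbol_line_derivative:
  assumes "smooth_symbol S"
  shows "((\<lambda>h. S (x + h *\<^sub>R v) (\<xi> + h *\<^sub>R w)) has_real_derivative
           frechet_derivative (\<lambda>z. S (fst z) (snd z)) (at (x, \<xi>)) (v, w)) (at 0)"
proof -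
  let ?F = "\<lambda>z. S (fst z) (snd z)"
  let ?F' = "frechet_derivative ?F (at (x, \<xi>))"
  have dF: "(?F has_derivative ?F') (at (x, \<xi>))"
    using smooth_differentiable assms unfolding smooth_symbol_def
    by (simp add: frechet_derivative_works)
  have "((\<lambda>h. (x + h *\<^sub>R v, \<xi> + h *\<^sub>R w)) has_derivative (\<lambda>h. (h *\<^sub>R v, h *\<^sub>R w))) (at 0)"
    by (auto intro!: derivative_eq_intros)
  with dF have "((\<lambda>h. ?F (x + h *\<^sub>R v, \<xi> + h *\<^sub>R w)) has_derivative (\<lambda>h. ?F' (h *\<^sub>R v, h *\<^sub>R w))) (at 0)"
    using diff_chain_at by (fastforce simp: o_def)
  moreover have "?F' (h *\<^sub>R v, h *\<^sub>R w) = ?F' (v, w) * h" for h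
    using linear_scale[OF has_derivative_linear[OF dF], of h "(v, w)"] by (simp add: mult.commute)
  ultimately show ?thesis by (simp add: has_field_derivative_def)
qed

lemma dx_eq_frechet_derivative:
  "smooth_symbol S \<Longrightarrow> dx S i x \<xi> = frechet_derivative (\<lambda>z. S (fst z) (snd z)) (at (x, \<xi>)) (axis i 1, 0)"
  unfolding dx_def using smooth_symbol_line_derivative[of S x "axis i 1" \<xi> 0]
  by (simp add: DERIV_imp_deriv)

lemma dxi_eq_frechet_derivative:
  "smooth_symbol S \<Longrightarrow> dxi S i x \<xi> = frechet_derivative (\<lambda>z. S (fst z) (snd z)) (at (x, \<xi>)) (0, axis i 1)"
  unfolding dxi_def using smooth_symbol_line_derivative[of S x 0 \<xi> "axis i 1"]
  by (simp add: DERIV_imp_deriv)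

lemma has_real_derivative_dx:
  "smooth_symbol S \<Longrightarrow> ((\<lambda>h. S (x + h *\<^sub>R axis i 1) \<xi>) has_real_derivative dx S i x \<xi>) (at 0)"
  using smooth_symbol_line_derivative[of S x "axis i 1" \<xi> 0] by (simp add: dx_eq_frechet_derivative)

lemma has_real_derivative_dxi:
  "smooth_symbol S \<Longrightarrow> ((\<lambda>h. S x (\<xi> + h *\<^sub>R axis i 1)) has_real_derivative dxi S i x \<xi>) (at 0)"
  using smooth_symbol_line_derivative[of S x 0 \<xi> "axis i 1"] by (simp add: dxi_eq_frechet_derivative)

lemma smooth_symbol_dx: "smooth_symbol S \<Longrightarrow> smooth_symbol (dx S i)"
  by (simp add: smooth_symbol_def dx_eq_frechet_derivative smooth_frechet_derivative)

lemma smooth_symbol_dxi: "smooth_symbol S \<Longrightarrow> smooth_symbol (dxi S i)"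
  by (simp add: smooth_symbol_def dxi_eq_frechet_derivative smooth_frechet_derivative)

lemma smooth_symbol_const: "smooth_symbol (\<lambda>x \<xi>. c)"
  by (simp add: smooth_symbol_def smooth_const)

lemma smooth_symbol_add:
  "smooth_symbol S \<Longrightarrow> smooth_symbol T \<Longrightarrow> smooth_symbol (\<lambda>x \<xi>. S x \<xi> + T x \<xi>)"
  unfolding smooth_symbol_def by (rule smooth_add)

lemma smooth_symbol_mult:
  "smooth_symbol S \<Longrightarrow> smooth_symbol T \<Longrightarrow> smooth_symbol (\<lambda>x \<xi>. S x \<xi> * T x \<xi>)"
  unfolding smooth_symbol_def by (rule smooth_mult)

lemma smooth_symbol_x: "smooth_symbol (\<lambda>x \<xi>. x $ a)"
  unfolding smooth_symbol_def
  by (intro smooth_bounded_linear bounded_linear_compose[OF bounded_linear_vec_nth bounded_linear_fst])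

lemma smooth_symbol_xi: "smooth_symbol (\<lambda>x \<xi>. \<xi> $ a)"
  unfolding smooth_symbol_def
  by (intro smooth_bounded_linear bounded_linear_compose[OF bounded_linear_vec_nth bounded_linear_snd])

section \<open>Homogeneous polynomials\<close>

definition monomial :: "('i::finite \<Rightarrow> nat) \<Rightarrow> real ^ 'i \<Rightarrow> real" where
  "monomial a \<xi> = (\<Prod>i\<in>UNIV. (\<xi> $ i) ^ a i)"

definition unit_exp :: "'i \<Rightarrow> 'i \<Rightarrow> nat" where
  "unit_exp j i = (if i = j then 1 else 0)"

definition partial :: "(real ^ 'i::finite \<Rightarrow> real) \<Rightarrow> 'i \<Rightarrow> real ^ 'i \<Rightarrow> real" where
  "partial f j \<xi> = deriv (\<lambda>h. f (\<xi> + h *\<^sub>R axis j 1)) 0"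

lemma hom_polyE:
  assumes "hom_poly k f"
  obtains A c where "finite A" "\<And>a. a \<in> A \<Longrightarrow> sum a UNIV = k"
    "\<And>\<xi>. f \<xi> = (\<Sum>a\<in>A. c a * monomial a \<xi>)"
  using assms unfolding hom_poly_def monomial_def by blast

text \<open>Unlike the definition of \<^const>\<open>hom_poly\<close>, this rule allows repeated exponent vectors.\<close>
lemma hom_polyI:
  fixes e :: "'b \<Rightarrow> 'i::finite \<Rightarrow> nat"
  assumes B: "finite B" and deg: "\<And>b. b \<in> B \<Longrightarrow> c b \<noteq> 0 \<Longrightarrow> sum (e b) UNIV = k"
    and f: "\<And>\<xi>. f \<xi> = (\<Sum>b\<in>B. c b * monomial (e b) \<xi>)"
  shows "hom_poly k f"
proof -
  define B' where "B' = {b\<in>B. c b \<noteq> 0}"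
  have fB': "finite B'" using B by (simp add: B'_def)
  define c' where "c' a = (\<Sum>b\<in>{b\<in>B'. e b = a}. c b)" for a
  have "f \<xi> = (\<Sum>a\<in>e ` B'. c' a * monomial a \<xi>)" for \<xi>
  proof -
    have "f \<xi> = (\<Sum>b\<in>B'. c b * monomial (e b) \<xi>)"
      unfolding f B'_def using B by (intro sum.mono_neutral_cong_right) auto
    also have "\<dots> = (\<Sum>a\<in>e ` B'. \<Sum>b\<in>{b\<in>B'. e b = a}. c b * monomial (e b) \<xi>)"
      using fB' by (rule sum.image_gen)
    also have "\<dots> = (\<Sum>a\<in>e ` B'. c' a * monomial a \<xi>)"
      unfolding c'_def sum_distrib_right by (intro sum.cong refl) auto
    finally show ?thesis .
  qed
  moreover have "\<forall>a\<in>e ` B'. sum a UNIV = k" using deg by (auto simp: B'_def)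
  ultimately show ?thesis unfolding hom_poly_def monomial_def using fB'
    by (intro exI[of _ "e ` B'"] exI[of _ c']) auto
qed

lemma monomial_split: "monomial a \<xi> = \<xi> $ j ^ a j * (\<Prod>i\<in>UNIV-{j}. (\<xi> $ i) ^ a i)"
  unfolding monomial_def by (simp add: prod.remove)

lemma monomial_add_unit_exp: "monomial (\<lambda>i. a i + unit_exp l i) \<xi> = \<xi> $ l * monomial a \<xi>"
proof -
  have "(\<Prod>i\<in>UNIV-{l}. (\<xi> $ i) ^ (a i + unit_exp l i)) = (\<Prod>i\<in>UNIV-{l}. (\<xi> $ i) ^ a i)"
    by (intro prod.cong) (auto simp: unit_exp_def)
  then show ?thesis unfolding monomial_split[of _ _ l] by (simp add: unit_exp_def)
qed

lemma monomial_diff_unit_exp: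
  "monomial (\<lambda>i. a i - unit_exp j i) \<xi> = \<xi> $ j ^ (a j - 1) * (\<Prod>i\<in>UNIV-{j}. (\<xi> $ i) ^ a i)"
  unfolding monomial_split[of _ _ j] by (auto simp: unit_exp_def intro!: prod.cong)

lemma has_real_derivative_monomial:
  "((\<lambda>h. monomial a (\<xi> + h *\<^sub>R axis j 1)) has_real_derivative
     real (a j) * monomial (\<lambda>i. a i - unit_exp j i) \<xi>) (at 0)"
proof -
  define P where "P = (\<Prod>i\<in>UNIV-{j}. (\<xi> $ i) ^ a i)"
  have "monomial a (\<xi> + h *\<^sub>R axis j 1) = (\<xi> $ j + h) ^ a j * P" for h
  proof -
    have "(\<Prod>i\<in>UNIV-{j}. ((\<xi> + h *\<^sub>R axis j 1) $ i) ^ a i) = P"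
      unfolding P_def by (intro prod.cong) (auto simp: axis_def)
    then show ?thesis unfolding monomial_split[of _ _ j] by (simp add: axis_def)
  qed
  moreover have "((\<lambda>h. (\<xi> $ j + h) ^ a j * P) has_real_derivative
                  real (a j) * (\<xi> $ j + 0) ^ (a j - 1) * 1 * P) (at 0)"
    by (intro derivative_eq_intros) auto
  ultimately show ?thesis by (simp add: monomial_diff_unit_exp P_def mult.assoc)
qed

lemma partial_monomial_sum:
  assumes "finite B" "\<And>\<xi>. f \<xi> = (\<Sum>b\<in>B. c b * monomial (e b) \<xi>)"
  shows "partial f j = (\<lambda>\<xi>. \<Sum>b\<in>B. (c b * real (e b j)) * monomial (\<lambda>i. e b i - unit_exp j i) \<xi>)"
proof
  fix \<xi>
  have "((\<lambda>h. f (\<xi> + h *\<^sub>R axis j 1)) has_real_derivative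
          (\<Sum>b\<in>B. (c b * real (e b j)) * monomial (\<lambda>i. e b i - unit_exp j i) \<xi>)) (at 0)"
    unfolding assms(2) mult.assoc using assms(1)
    by (intro DERIV_sum DERIV_cmult has_real_derivative_monomial)
  then show "partial f j \<xi> = (\<Sum>b\<in>B. (c b * real (e b j)) * monomial (\<lambda>i. e b i - unit_exp j i) \<xi>)"
    by (simp add: partial_def DERIV_imp_deriv)
qed

lemma sum_diff_unit_exp:
  assumes "1 \<le> (a::'i::finite \<Rightarrow> nat) j"
  shows "sum (\<lambda>i. a i - unit_exp j i) UNIV = sum a UNIV - 1"
proof -
  have "sum (\<lambda>i. a i - unit_exp j i) UNIV = (a j - 1) + sum (\<lambda>i. a i - unit_exp j i) (UNIV - {j})"
    by (subst sum.remove[of UNIV j]) (auto simp: unit_exp_def)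
  also have "sum (\<lambda>i. a i - unit_exp j i) (UNIV - {j}) = sum a (UNIV - {j})"
    by (intro sum.cong) (auto simp: unit_exp_def)
  also have "sum a UNIV = a j + sum a (UNIV - {j})" by (simp add: sum.remove)
  ultimately show ?thesis using assms by simp
qed

lemma hom_poly_partial: "hom_poly k f \<Longrightarrow> hom_poly (k - 1) (partial f j)"
proof (erule hom_polyE)
  fix A c
  assume A: "finite A" "\<And>a. a \<in> A \<Longrightarrow> sum a UNIV = k" "\<And>\<xi>. f \<xi> = (\<Sum>a\<in>A. c a * monomial a \<xi>)"
  show "hom_poly (k - 1) (partial f j)"
  proof (rule hom_polyI[OF A(1)])
    fix a assume "a \<in> A" "c a * real (a j) \<noteq> 0"
    then show "sum (\<lambda>i. a i - unit_exp j i) UNIV = k - 1"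
      using A(2) sum_diff_unit_exp[of a j] by simp
  qed (simp add: partial_monomial_sum[OF A(1) A(3)])
qed

lemma coord_mult_partial_monomial:
  "\<xi> $ l * (real (a l) * monomial (\<lambda>i. a i - unit_exp l i) \<xi>) = real (a l) * monomial a \<xi>"
proof (cases "a l")
  case (Suc d)
  then show ?thesis
    by (simp add: monomial_diff_unit_exp monomial_split[of a _ l] mult_ac)
qed simp

lemma hom_poly_Euler: "hom_poly k f \<Longrightarrow> (\<Sum>l\<in>UNIV. \<xi> $ l * partial f l \<xi>) = real k * f \<xi>"
proof (erule hom_polyE)
  fix A c
  assume A: "finite A" "\<And>a. a \<in> A \<Longrightarrow> sum a UNIV = k" "\<And>\<xi>. f \<xi> = (\<Sum>a\<in>A. c a * monomial a \<xi>)"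
  have "(\<Sum>l\<in>UNIV. \<xi> $ l * partial f l \<xi>) =
        (\<Sum>l\<in>UNIV. \<Sum>a\<in>A. c a * (\<xi> $ l * (real (a l) * monomial (\<lambda>i. a i - unit_exp l i) \<xi>)))"
    unfolding partial_monomial_sum[OF A(1) A(3)] by (simp add: sum_distrib_left algebra_simps)
  also have "\<dots> = (\<Sum>a\<in>A. c a * real (sum a UNIV) * monomial a \<xi>)"
    unfolding coord_mult_partial_monomial
    by (subst sum.swap) (simp add: sum_distrib_left sum_distrib_right algebra_simps)
  also have "\<dots> = real k * f \<xi>"
    using A(2) by (simp add: A(3) sum_distrib_left algebra_simps)
  finally show ?thesis .
qed

lemma hom_poly_partial_commute: "hom_poly k f \<Longrightarrow> partial (partial f j) l \<xi> = partial (partial f l) j \<xi>"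
proof (erule hom_polyE)
  fix A c
  assume A: "finite A" "\<And>a. a \<in> A \<Longrightarrow> sum a UNIV = k" "\<And>\<xi>. f \<xi> = (\<Sum>a\<in>A. c a * monomial a \<xi>)"
  have "partial (partial f j) l \<xi> = (\<Sum>a\<in>A. (c a * real (a j) * real (a l - unit_exp j l)) *
          monomial (\<lambda>i. (a i - unit_exp j i) - unit_exp l i) \<xi>)"
    by (simp add: partial_monomial_sum[OF A(1) partial_monomial_sum[OF A(1) A(3), THEN fun_cong]])
  also have "\<dots> = (\<Sum>a\<in>A. (c a * real (a l) * real (a j - unit_exp l j)) *
          monomial (\<lambda>i. (a i - unit_exp l i) - unit_exp j i) \<xi>)"
    by (intro sum.cong refl, cases "j = l") (auto simp: unit_exp_def diff_commute add.commute)
  also have "\<dots> = partial (partial f l) j \<xi>"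
    by (simp add: partial_monomial_sum[OF A(1) partial_monomial_sum[OF A(1) A(3), THEN fun_cong]])
  finally show ?thesis .
qed

lemma hom_poly_0_const: "hom_poly 0 f \<Longrightarrow> f \<xi> = f \<eta>"
proof (erule hom_polyE)
  fix A c
  assume A: "finite A" "\<And>a. a \<in> A \<Longrightarrow> sum a UNIV = 0" "\<And>\<xi>. f \<xi> = (\<Sum>a\<in>A. c a * monomial a \<xi>)"
  have "monomial a \<xi> = monomial a \<eta>" if "a \<in> A" for a
    using A(2)[OF that] by (simp add: monomial_def)
  then show ?thesis unfolding A(3) by (intro sum.cong) auto
qed

lemma hom_poly_zero: "hom_poly k (\<lambda>\<xi>. 0)"
  unfolding hom_poly_def by (intro exI[of _ "{}"]) auto

lemma hom_poly_const: "hom_poly 0 (\<lambda>\<xi>. r)"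
  by (rule hom_polyI[of "{()}" "\<lambda>_. r" "\<lambda>_ _. 0"]) (auto simp: monomial_def)

lemma hom_poly_lin:
  assumes "hom_poly k f" "hom_poly k g"
  shows "hom_poly k (\<lambda>\<xi>. r * f \<xi> + s * g \<xi>)"
proof -
  obtain A c where A: "finite A" "\<And>a. a \<in> A \<Longrightarrow> sum a UNIV = k"
    "\<And>\<xi>. f \<xi> = (\<Sum>a\<in>A. c a * monomial a \<xi>)"
    using hom_polyE[OF assms(1)] by blast
  obtain B d where B: "finite B" "\<And>a. a \<in> B \<Longrightarrow> sum a UNIV = k"
    "\<And>\<xi>. g \<xi> = (\<Sum>a\<in>B. d a * monomial a \<xi>)"
    using hom_polyE[OF assms(2)] by blast
  show ?thesis
    by (rule hom_polyI[where B="A <+> B" and c="case_sum (\<lambda>a. r * c a) (\<lambda>a. s * d a)"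
          and e="case_sum id id"])
       (use A B in \<open>auto simp: sum.Plus sum_distrib_left mult.assoc\<close>)
qed

lemma hom_poly_add: "hom_poly k f \<Longrightarrow> hom_poly k g \<Longrightarrow> hom_poly k (\<lambda>\<xi>. f \<xi> + g \<xi>)"
  using hom_poly_lin[of k f g 1 1] by simp

lemma hom_poly_cmult: "hom_poly k f \<Longrightarrow> hom_poly k (\<lambda>\<xi>. r * f \<xi>)"
  using hom_poly_lin[of k f f r 0] by simp

lemma hom_poly_sum:
  "finite I \<Longrightarrow> (\<And>i. i \<in> I \<Longrightarrow> hom_poly k (f i)) \<Longrightarrow> hom_poly k (\<lambda>\<xi>. \<Sum>i\<in>I. f i \<xi>)"
  by (induction I rule: finite_induct) (auto intro: hom_poly_add hom_poly_zero)

lemma hom_poly_coord_mult: "hom_poly k f \<Longrightarrow> hom_poly (Suc k) (\<lambda>\<xi>. \<xi> $ l * f \<xi>)"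
proof (erule hom_polyE)
  fix A c
  assume A: "finite A" "\<And>a. a \<in> A \<Longrightarrow> sum a UNIV = k" "\<And>\<xi>. f \<xi> = (\<Sum>a\<in>A. c a * monomial a \<xi>)"
  show ?thesis
  proof (rule hom_polyI[OF A(1), where c=c and e="\<lambda>a i. a i + unit_exp l i"])
    show "\<And>b. b \<in> A \<Longrightarrow> c b \<noteq> 0 \<Longrightarrow> (\<Sum>i\<in>UNIV. b i + unit_exp l i) = Suc k"
      using A(2) by (simp add: sum.distrib unit_exp_def)
    show "\<And>\<xi>. \<xi> $ l * f \<xi> = (\<Sum>b\<in>A. c b * monomial (\<lambda>i. b i + unit_exp l i) \<xi>)"
      by (simp add: A(3) monomial_add_unit_exp sum_distrib_left algebra_simps)
  qed
qed

lemma Rsp_iff: "S \<in> Rsp k \<longleftrightarrow> smooth_symbol S \<and> (\<forall>x. hom_poly k (S x))"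
  by (simp add: Rsp_def smooth_symbol_def case_prod_unfold)

lemma Rsp_smooth_symbol: "S \<in> Rsp k \<Longrightarrow> smooth_symbol S"
  by (simp add: Rsp_iff)

lemma Rsp_hom_poly: "S \<in> Rsp k \<Longrightarrow> hom_poly k (S x)"
  by (simp add: Rsp_iff)

lemma dxi_eq_partial: "dxi S i x = partial (S x) i"
  by (rule ext) (simp add: dxi_def partial_def)

lemma Rsp_dxi: "S \<in> Rsp k \<Longrightarrow> dxi S i \<in> Rsp (k - 1)"
  by (metis Rsp_iff smooth_symbol_dxi dxi_eq_partial hom_poly_partial)

lemma Rsp_Euler: "S \<in> Rsp k \<Longrightarrow> (\<Sum>l\<in>UNIV. \<xi> $ l * dxi S l x \<xi>) = real k * S x \<xi>"
  by (simp add: Rsp_iff dxi_eq_partial hom_poly_Euler)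

lemma Rsp_0_const: "S \<in> Rsp 0 \<Longrightarrow> S x \<xi> = S x \<eta>"
  using hom_poly_0_const Rsp_hom_poly by blast

lemma Rsp_dxi_commute: "S \<in> Rsp k \<Longrightarrow> dxi (dxi S j) l x \<xi> = dxi (dxi S l) j x \<xi>"
  by (metis dxi_eq_partial hom_poly_partial_commute Rsp_hom_poly)

lemma Rsp_zero: "(\<lambda>x \<xi>. 0) \<in> Rsp k"
  by (simp add: Rsp_iff smooth_symbol_const hom_poly_zero)

lemma Rsp_lin: "S \<in> Rsp k \<Longrightarrow> T \<in> Rsp k \<Longrightarrow> (\<lambda>x \<xi>. r * S x \<xi> + s * T x \<xi>) \<in> Rsp k"
  by (simp add: Rsp_iff hom_poly_lin smooth_symbol_add smooth_symbol_mult smooth_symbol_const)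

lemma Rsp_add: "S \<in> Rsp k \<Longrightarrow> T \<in> Rsp k \<Longrightarrow> (\<lambda>x \<xi>. S x \<xi> + T x \<xi>) \<in> Rsp k"
  using Rsp_lin[of S k T 1 1] by simp

lemma Rsp_diff: "S \<in> Rsp k \<Longrightarrow> T \<in> Rsp k \<Longrightarrow> (\<lambda>x \<xi>. S x \<xi> - T x \<xi>) \<in> Rsp k"
  using Rsp_lin[of S k T 1 "-1"] by simp

lemma Rsp_cmult: "S \<in> Rsp k \<Longrightarrow> (\<lambda>x \<xi>. r * S x \<xi>) \<in> Rsp k"
  using Rsp_lin[of S k S r 0] by simp

lemma Rsp_sum: "finite I \<Longrightarrow> (\<And>i. i \<in> I \<Longrightarrow> S i \<in> Rsp k) \<Longrightarrow> (\<lambda>x \<xi>. \<Sum>i\<in>I. S i x \<xi>) \<in> Rsp k"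
  by (induction I rule: finite_induct) (auto intro: Rsp_add Rsp_zero)

lemma Rsp_mult_x: "S \<in> Rsp k \<Longrightarrow> (\<lambda>x \<xi>. x $ a * S x \<xi>) \<in> Rsp k"
  by (simp add: Rsp_iff hom_poly_cmult smooth_symbol_mult smooth_symbol_x)

lemma Rsp_mult_xi: "S \<in> Rsp k \<Longrightarrow> (\<lambda>x \<xi>. \<xi> $ a * S x \<xi>) \<in> Rsp (Suc k)"
  by (simp add: Rsp_iff hom_poly_coord_mult smooth_symbol_mult smooth_symbol_xi)

text \<open>In place of Schwarz's theorem, \<open>x\<close>-derivatives of symbols are controlled by Euler's
  identity differentiated in \<open>x\<close>; degrees and mixed partials then follow by induction on the degree.\<close>
lemma dx_Euler:
  assumes S: "S \<in> Rsp k"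
  shows "(\<Sum>l\<in>UNIV. \<xi> $ l * dx (dxi S l) a x \<xi>) = real k * dx S a x \<xi>"
proof -
  have S': "smooth_symbol S" using S by (rule Rsp_smooth_symbol)
  have "((\<lambda>h. \<Sum>l\<in>UNIV. \<xi> $ l * dxi S l (x + h *\<^sub>R axis a 1) \<xi>) has_real_derivative
          (\<Sum>l\<in>UNIV. \<xi> $ l * dx (dxi S l) a x \<xi>)) (at 0)"
    by (intro DERIV_sum DERIV_cmult has_real_derivative_dx smooth_symbol_dxi S')
  then have "((\<lambda>h. real k * S (x + h *\<^sub>R axis a 1) \<xi>) has_real_derivative
          (\<Sum>l\<in>UNIV. \<xi> $ l * dx (dxi S l) a x \<xi>)) (at 0)"
    by (simp add: Rsp_Euler[OF S])
  moreover have "((\<lambda>h. real k * S (x + h *\<^sub>R axis a 1) \<xi>) has_real_derivative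
                   real k * dx S a x \<xi>) (at 0)"
    by (intro DERIV_cmult has_real_derivative_dx S')
  ultimately show ?thesis by (rule DERIV_unique)
qed

lemma has_real_derivative_coord_line: "((\<lambda>h. (\<xi> + h *\<^sub>R v) $ j) has_real_derivative v $ j) (at t)"
  by (auto intro!: derivative_eq_intros)

lemma sum_axis_mult: "(\<Sum>j\<in>UNIV. axis l 1 $ j * f j) = (f l :: real)"
  by (simp add: axis_def of_bool_def[symmetric])

lemma dx_Rsp_0_const: "S \<in> Rsp 0 \<Longrightarrow> dx S a x \<xi> = dx S a x \<eta>"
  unfolding dx_def by (metis Rsp_0_const)

lemma dxi_Rsp_0: "S \<in> Rsp 0 \<Longrightarrow> dxi S l x \<xi> = 0"
proof -
  assume "S \<in> Rsp 0"
  then have "(\<lambda>h. S x (\<xi> + h *\<^sub>R axis l 1)) = (\<lambda>h. S x \<xi>)"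
    by (intro ext Rsp_0_const)
  then show ?thesis by (simp add: dxi_def)
qed

lemma dx_eq_Euler_quotient:
  "S \<in> Rsp (Suc k) \<Longrightarrow> dx S a x \<xi> = (\<Sum>l\<in>UNIV. \<xi> $ l * dx (dxi S l) a x \<xi>) / real (Suc k)"
  by (simp add: dx_Euler del: of_nat_Suc)

lemma Rsp_dx: "S \<in> Rsp k \<Longrightarrow> dx S a \<in> Rsp k"
proof (induction k arbitrary: S)
  case 0
  have "dx S a x = (\<lambda>\<xi>. dx S a x 0)" for x
    by (intro ext dx_Rsp_0_const[OF 0])
  then have "hom_poly 0 (dx S a x)" for x
    by (metis hom_poly_const)
  with 0 show ?case by (simp add: Rsp_iff smooth_symbol_dx)
next
  case (Suc k)
  have "hom_poly k (dx (dxi S l) a x)" for l x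
    using Rsp_dxi[OF Suc.prems, of l] by (intro Rsp_hom_poly Suc.IH) simp
  then have "hom_poly (Suc k) (\<lambda>\<xi>. (\<Sum>l\<in>UNIV. \<xi> $ l * dx (dxi S l) a x \<xi>) / real (Suc k))" for x
    unfolding divide_inverse mult.commute[of _ "inverse _"]
    by (intro hom_poly_cmult hom_poly_sum hom_poly_coord_mult) auto
  moreover have "dx S a x = (\<lambda>\<xi>. (\<Sum>l\<in>UNIV. \<xi> $ l * dx (dxi S l) a x \<xi>) / real (Suc k))" for x
    by (rule ext) (rule dx_eq_Euler_quotient[OF Suc.prems])
  ultimately have "hom_poly (Suc k) (dx S a x)" for x
    by metis
  with Suc.prems show ?case by (simp add: Rsp_iff smooth_symbol_dx)
qed

lemma dxi_dx_commute: "S \<in> Rsp k \<Longrightarrow> dxi (dx S a) l x \<xi> = dx (dxi S l) a x \<xi>"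
proof (induction k arbitrary: S x \<xi>)
  case 0
  have "dxi S l = (\<lambda>x \<xi>. 0)"
    using 0 by (intro ext dxi_Rsp_0)
  moreover have "dxi (dx S a) l x \<xi> = 0"
    using 0 by (intro dxi_Rsp_0 Rsp_dx)
  moreover have "dx (\<lambda>x \<xi>. 0) a x \<xi> = 0"
    by (simp add: dx_def)
  ultimately show ?case by simp
next
  case (Suc k)
  define T where "T j = dxi S j" for j
  have T: "T j \<in> Rsp k" for j
    unfolding T_def using Rsp_dxi[OF Suc.prems] by simp
  have "((\<lambda>h. (\<xi> + h *\<^sub>R axis l 1) $ j * dx (T j) a x (\<xi> + h *\<^sub>R axis l 1)) has_real_derivative
          axis l 1 $ j * dx (T j) a x \<xi> + \<xi> $ j * dxi (dx (T j) a) l x \<xi>) (at 0)" for j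
    by (rule DERIV_cong[OF DERIV_mult[OF has_real_derivative_coord_line has_real_derivative_dxi]])
       (use T in \<open>simp_all add: smooth_symbol_dx Rsp_smooth_symbol[OF T]\<close>)
  then have "((\<lambda>h. (\<Sum>j\<in>UNIV. (\<xi> + h *\<^sub>R axis l 1) $ j * dx (T j) a x (\<xi> + h *\<^sub>R axis l 1)) / real (Suc k))
         has_real_derivative
         (\<Sum>j\<in>UNIV. axis l 1 $ j * dx (T j) a x \<xi> + \<xi> $ j * dxi (dx (T j) a) l x \<xi>) / real (Suc k)) (at 0)"
    by (intro DERIV_cdivide DERIV_sum)
  moreover have "(\<Sum>j\<in>UNIV. axis l 1 $ j * dx (T j) a x \<xi>) = dx (T l) a x \<xi>"
    by (rule sum_axis_mult)
  moreover have "(\<Sum>j\<in>UNIV. \<xi> $ j * dxi (dx (T j) a) l x \<xi>) = real k * dx (T l) a x \<xi>"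
  proof -
    have "dxi (T j) l = dxi (T l) j" for j
      unfolding T_def by (intro ext Rsp_dxi_commute[OF Suc.prems])
    then have "dxi (dx (T j) a) l x \<xi> = dx (dxi (T l) j) a x \<xi>" for j
      using Suc.IH[OF T] by metis
    then show ?thesis using dx_Euler[OF T[of l]] by simp
  qed
  ultimately have "((\<lambda>h. dx S a x (\<xi> + h *\<^sub>R axis l 1)) has_real_derivative
      (dx (T l) a x \<xi> + real k * dx (T l) a x \<xi>) / real (Suc k)) (at 0)"
    unfolding dx_eq_Euler_quotient[OF Suc.prems] T_def by (simp add: sum.distrib)
  then have "dxi (dx S a) l x \<xi> = (dx (T l) a x \<xi> + real k * dx (T l) a x \<xi>) / real (Suc k)"
    by (simp add: dxi_def DERIV_imp_deriv)
  also have "\<dots> = dx (dxi S l) a x \<xi>"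
    by (simp add: T_def field_simps)
  finally show ?case .
qed

definition fibre_op ::
    "('n::finite pt \<Rightarrow> ('n + 'n + unit) \<Rightarrow> real) \<Rightarrow> ('n pt \<Rightarrow> 'n pt \<Rightarrow> real) \<Rightarrow> 'n pt \<Rightarrow> 'n pt \<Rightarrow> real" where
  "fibre_op A S x \<xi> = (\<Sum>l\<in>UNIV. A x l * dxi S l x \<xi>)"

definition base_op ::
    "('n::finite pt \<Rightarrow> 'n pt \<Rightarrow> ('n + 'n + unit) \<Rightarrow> real) \<Rightarrow> ('n pt \<Rightarrow> 'n pt \<Rightarrow> real) \<Rightarrow> 'n pt \<Rightarrow> 'n pt \<Rightarrow> real" where
  "base_op V S x \<xi> = (\<Sum>a\<in>UNIV. V x \<xi> a * dx S a x \<xi>)"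

lemma dxi_base_op:
  assumes S: "S \<in> Rsp m"
    and V: "\<And>a l. ((\<lambda>h. V x (\<xi> + h *\<^sub>R axis l 1) a) has_real_derivative dV a l) (at 0)"
  shows "dxi (base_op V S) l x \<xi> =
           (\<Sum>a\<in>UNIV. dV a l * dx S a x \<xi>) + (\<Sum>a\<in>UNIV. V x \<xi> a * dx (dxi S l) a x \<xi>)"
proof -
  have "((\<lambda>h. V x (\<xi> + h *\<^sub>R axis l 1) a * dx S a x (\<xi> + h *\<^sub>R axis l 1)) has_real_derivative
         dV a l * dx S a x \<xi> + V x \<xi> a * dx (dxi S l) a x \<xi>) (at 0)" for a
    using S by (intro DERIV_cong[OF DERIV_mult[OF V has_real_derivative_dxi]])
      (simp_all add: smooth_symbol_dx Rsp_smooth_symbol dxi_dx_commute)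
  then have "((\<lambda>h. base_op V S x (\<xi> + h *\<^sub>R axis l 1)) has_real_derivative
         (\<Sum>a\<in>UNIV. dV a l * dx S a x \<xi> + V x \<xi> a * dx (dxi S l) a x \<xi>)) (at 0)"
    unfolding base_op_def by (intro DERIV_sum)
  then show ?thesis
    by (simp add: dxi_def[of "base_op V S"] DERIV_imp_deriv sum.distrib)
qed

lemma dx_fibre_op:
  assumes S: "smooth_symbol S"
    and A: "\<And>a l. ((\<lambda>h. A (x + h *\<^sub>R axis a 1) l) has_real_derivative dA a l) (at 0)"
  shows "dx (fibre_op A S) a x \<xi> =
           (\<Sum>l\<in>UNIV. dA a l * dxi S l x \<xi>) + (\<Sum>l\<in>UNIV. A x l * dx (dxi S l) a x \<xi>)"
proof -
  have "((\<lambda>h. A (x + h *\<^sub>R axis a 1) l * dxi S l (x + h *\<^sub>R axis a 1) \<xi>) has_real_derivative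
         dA a l * dxi S l x \<xi> + A x l * dx (dxi S l) a x \<xi>) (at 0)" for l
    by (intro DERIV_cong[OF DERIV_mult[OF A has_real_derivative_dx[OF smooth_symbol_dxi[OF S]]]])
      simp
  then have "((\<lambda>h. fibre_op A S (x + h *\<^sub>R axis a 1) \<xi>) has_real_derivative
         (\<Sum>l\<in>UNIV. dA a l * dxi S l x \<xi> + A x l * dx (dxi S l) a x \<xi>)) (at 0)"
    unfolding fibre_op_def by (intro DERIV_sum)
  then show ?thesis
    by (simp add: dx_def[of "fibre_op A S"] DERIV_imp_deriv sum.distrib)
qed

text \<open>The second-order terms cancel, since \<open>x\<close>- and \<open>\<xi>\<close>-derivatives commute on \<open>R\<^sup>m\<close>.\<close>
lemma fibre_op_base_op_commutator:
  assumes S: "S \<in> Rsp m"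
    and V: "\<And>a l. ((\<lambda>h. V x (\<xi> + h *\<^sub>R axis l 1) a) has_real_derivative dV a l) (at 0)"
    and A: "\<And>a l. ((\<lambda>h. A (x + h *\<^sub>R axis a 1) l) has_real_derivative dA a l) (at 0)"
  shows "fibre_op A (base_op V S) x \<xi> - base_op V (fibre_op A S) x \<xi> =
           (\<Sum>a\<in>UNIV. (\<Sum>l\<in>UNIV. A x l * dV a l) * dx S a x \<xi>)
         - (\<Sum>l\<in>UNIV. (\<Sum>a\<in>UNIV. V x \<xi> a * dA a l) * dxi S l x \<xi>)"
proof -
  have S': "smooth_symbol S" using S by (rule Rsp_smooth_symbol)
  have "fibre_op A (base_op V S) x \<xi> =
          (\<Sum>l\<in>UNIV. \<Sum>a\<in>UNIV. A x l * dV a l * dx S a x \<xi>)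
        + (\<Sum>l\<in>UNIV. \<Sum>a\<in>UNIV. A x l * V x \<xi> a * dx (dxi S l) a x \<xi>)"
    unfolding fibre_op_def dxi_base_op[where V=V and dV=dV, OF S V]
    by (simp add: sum.distrib sum_distrib_left distrib_left mult_ac)
  also have "(\<Sum>l\<in>UNIV. \<Sum>a\<in>UNIV. A x l * dV a l * dx S a x \<xi>) =
               (\<Sum>a\<in>UNIV. (\<Sum>l\<in>UNIV. A x l * dV a l) * dx S a x \<xi>)"
    by (subst sum.swap) (simp add: sum_distrib_right)
  moreover have "base_op V (fibre_op A S) x \<xi> =
          (\<Sum>a\<in>UNIV. \<Sum>l\<in>UNIV. V x \<xi> a * dA a l * dxi S l x \<xi>)
        + (\<Sum>a\<in>UNIV. \<Sum>l\<in>UNIV. A x l * V x \<xi> a * dx (dxi S l) a x \<xi>)"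
    unfolding base_op_def dx_fibre_op[where A=A and dA=dA, OF S' A]
    by (simp add: sum.distrib sum_distrib_left distrib_left mult_ac)
  moreover have "(\<Sum>a\<in>UNIV. \<Sum>l\<in>UNIV. V x \<xi> a * dA a l * dxi S l x \<xi>) =
               (\<Sum>l\<in>UNIV. (\<Sum>a\<in>UNIV. V x \<xi> a * dA a l) * dxi S l x \<xi>)"
    by (subst sum.swap) (simp add: sum_distrib_right)
  moreover have "(\<Sum>a\<in>UNIV. \<Sum>l\<in>UNIV. A x l * V x \<xi> a * dx (dxi S l) a x \<xi>) =
               (\<Sum>l\<in>UNIV. \<Sum>a\<in>UNIV. A x l * V x \<xi> a * dx (dxi S l) a x \<xi>)"
    by (rule sum.swap)
  ultimately show ?thesis by simp
qed

lemma fibre_op_mult_xi: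
  assumes "smooth_symbol S"
  shows "fibre_op A (\<lambda>x \<xi>. \<xi> $ c * S x \<xi>) x \<xi> = A x c * S x \<xi> + \<xi> $ c * fibre_op A S x \<xi>"
proof -
  have "dxi (\<lambda>x \<xi>. \<xi> $ c * S x \<xi>) l x \<xi> = axis l 1 $ c * S x \<xi> + \<xi> $ c * dxi S l x \<xi>" for l
    unfolding dxi_def[of "\<lambda>x \<xi>. \<xi> $ c * S x \<xi>"]
    by (rule DERIV_imp_deriv, rule DERIV_cong[OF DERIV_mult[OF has_real_derivative_coord_line
          has_real_derivative_dxi[OF assms]]]) simp
  then have "fibre_op A (\<lambda>x \<xi>. \<xi> $ c * S x \<xi>) x \<xi> =
      (\<Sum>l\<in>UNIV. axis l 1 $ c * A x l) * S x \<xi> + \<xi> $ c * fibre_op A S x \<xi>"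
    by (simp add: fibre_op_def sum.distrib sum_distrib_left sum_distrib_right distrib_left mult_ac)
  also have "(\<Sum>l\<in>UNIV. axis l 1 $ c * A x l) = A x c"
    by (simp add: axis_def if_distrib if_distribR cong: if_cong)
  finally show ?thesis .
qed

lemma coord_simps [simp]:
  "cq i = cq j \<longleftrightarrow> i = j" "cp i = cp j \<longleftrightarrow> i = j"
  "cq i \<noteq> cp j" "cp j \<noteq> cq i" "cq i \<noteq> ct" "ct \<noteq> cq i" "cp i \<noteq> ct" "ct \<noteq> cp i"
  by (auto simp: cq_def cp_def ct_def)

lemma coord_cases:
  obtains j where "l = cq j" | j where "l = cp j" | "l = ct"
  by (metis cq_def cp_def ct_def sum.exhaust old.unit.exhaust)

lemma sum_UNIV_coords:
  fixes f :: "'n::finite + 'n + unit \<Rightarrow> real"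
  shows "(\<Sum>l\<in>UNIV. f l) = (\<Sum>j\<in>UNIV. f (cq j)) + (\<Sum>j\<in>UNIV. f (cp j)) + f ct"
proof -
  have U: "(UNIV :: ('n + 'n + unit) set) = UNIV <+> (UNIV <+> UNIV)" by simp
  show ?thesis
    unfolding U by (simp del: UNIV_Plus_UNIV add: sum.Plus cq_def cp_def ct_def o_def UNIV_unit)
qed

lemma Rsp_Es: "S \<in> Rsp k \<Longrightarrow> Es S \<in> Rsp k"
proof -
  assume S: "S \<in> Rsp k"
  have "Es S = (\<lambda>x \<xi>. \<Sum>j\<in>UNIV. x $ cp j * dx S (cp j) x \<xi> + x $ cq j * dx S (cq j) x \<xi>)"
    by (intro ext) (simp add: Es_def)
  also have "\<dots> \<in> Rsp k"
    using S by (intro Rsp_sum Rsp_add Rsp_mult_x Rsp_dx) auto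
  finally show ?thesis .
qed

lemma Rsp_Dop: "S \<in> Rsp k \<Longrightarrow> Dop S \<in> Rsp (Suc k)"
proof -
  assume S: "S \<in> Rsp k"
  have "Dop S = (\<lambda>x \<xi>. (\<Sum>j\<in>UNIV. \<xi> $ cq j * dx S (cp j) x \<xi> - \<xi> $ cp j * dx S (cq j) x \<xi>)
      + \<xi> $ ct * Es S x \<xi>
      - (\<Sum>j\<in>UNIV. x $ cp j * (\<xi> $ cp j * dx S ct x \<xi>) + x $ cq j * (\<xi> $ cq j * dx S ct x \<xi>)))"
    by (intro ext) (simp add: Dop_def Es_xi_def sum_distrib_left distrib_left mult_ac)
  also have "\<dots> \<in> Rsp (Suc k)"
    using S by (intro Rsp_diff Rsp_add Rsp_sum Rsp_mult_xi Rsp_mult_x Rsp_dx Rsp_Es) auto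
  finally show ?thesis .
qed

lemma Rsp_Xop: "S \<in> Rsp k \<Longrightarrow> Xop \<delta> k S \<in> Rsp (Suc k)"
  for S :: "'n::finite pt \<Rightarrow> 'n pt \<Rightarrow> real"
proof -
  assume S: "S \<in> Rsp k"
  have "Xop \<delta> k S = (\<lambda>x \<xi>. Dop S x \<xi> + (2 * (real CARD('n) + 1) * \<delta> + real k) * (\<xi> $ ct * S x \<xi>))"
    by (intro ext) (simp add: Xop_def)
  also have "\<dots> \<in> Rsp (Suc k)"
    using S by (intro Rsp_add Rsp_cmult Rsp_Dop Rsp_mult_xi)
  finally show ?thesis .
qed

lemma Rsp_ialpha: "S \<in> Rsp k \<Longrightarrow> ialpha S \<in> Rsp (k - 1)"
proof -
  assume S: "S \<in> Rsp k"
  have "ialpha S = (\<lambda>x \<xi>. (1/2) * ((\<Sum>j\<in>UNIV. x $ cp j * dxi S (cq j) x \<xi> - x $ cq j * dxi S (cp j) x \<xi>)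
                                  - dxi S ct x \<xi>))"
    by (intro ext) (simp add: ialpha_def)
  also have "\<dots> \<in> Rsp (k - 1)"
    using S by (intro Rsp_cmult Rsp_diff Rsp_sum Rsp_mult_x Rsp_dxi) auto
  finally show ?thesis .
qed

lemma ialpha_Rsp_0: "S \<in> Rsp 0 \<Longrightarrow> ialpha S = (\<lambda>x \<xi>. 0)"
  by (intro ext) (simp add: ialpha_def dxi_Rsp_0)

lemma Dop_zero: "Dop (\<lambda>x \<xi>. 0) = (\<lambda>x \<xi>. 0)"
  by (intro ext) (simp add: Dop_def Es_def dx_def)

lemma Xop_zero: "Xop \<delta> k (\<lambda>x \<xi>. 0) = (\<lambda>x \<xi>. 0)"
  by (intro ext) (simp add: Xop_def Dop_zero)

lemma ialpha_zero: "ialpha (\<lambda>x \<xi>. 0) = (\<lambda>x \<xi>. 0)"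
  by (intro ext) (simp add: ialpha_def dxi_def)

lemma dx_add_cmult:
  "smooth_symbol S \<Longrightarrow> smooth_symbol T \<Longrightarrow>
     dx (\<lambda>x \<xi>. S x \<xi> + r * T x \<xi>) a x \<xi> = dx S a x \<xi> + r * dx T a x \<xi>"
  unfolding dx_def[of "\<lambda>x \<xi>. S x \<xi> + r * T x \<xi>"]
  by (intro DERIV_imp_deriv DERIV_add DERIV_cmult has_real_derivative_dx)

lemma dxi_add_cmult:
  "smooth_symbol S \<Longrightarrow> smooth_symbol T \<Longrightarrow>
     dxi (\<lambda>x \<xi>. S x \<xi> + r * T x \<xi>) i x \<xi> = dxi S i x \<xi> + r * dxi T i x \<xi>"
  unfolding dxi_def[of "\<lambda>x \<xi>. S x \<xi> + r * T x \<xi>"]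
  by (intro DERIV_imp_deriv DERIV_add DERIV_cmult has_real_derivative_dxi)

lemma dxi_add_sum:
  assumes "finite L" "smooth_symbol S" "\<And>l. l \<in> L \<Longrightarrow> smooth_symbol (W l)"
  shows "dxi (\<lambda>x \<xi>. S x \<xi> + (\<Sum>l\<in>L. c l * W l x \<xi>)) i x \<xi> =
           dxi S i x \<xi> + (\<Sum>l\<in>L. c l * dxi (W l) i x \<xi>)"
  unfolding dxi_def[of "\<lambda>x \<xi>. S x \<xi> + (\<Sum>l\<in>L. c l * W l x \<xi>)"]
  using assms by (intro DERIV_imp_deriv DERIV_add DERIV_sum DERIV_cmult has_real_derivative_dxi) auto

lemma Xop_add_cmult:
  assumes "smooth_symbol S" "smooth_symbol T"
  shows "Xop \<delta> k (\<lambda>x \<xi>. S x \<xi> + r * T x \<xi>) = (\<lambda>x \<xi>. Xop \<delta> k S x \<xi> + r * Xop \<delta> k T x \<xi>)"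
  by (intro ext) (simp add: Xop_def Dop_def Es_def dx_add_cmult[OF assms]
      algebra_simps sum.distrib sum_subtractf sum_distrib_left)

lemma ialpha_add_cmult:
  "smooth_symbol S \<Longrightarrow> smooth_symbol T \<Longrightarrow>
     ialpha (\<lambda>x \<xi>. S x \<xi> + r * T x \<xi>) x \<xi> = ialpha S x \<xi> + r * ialpha T x \<xi>"
  by (simp add: ialpha_def dxi_add_cmult algebra_simps sum.distrib sum_subtractf sum_distrib_left)

lemma ialpha_add_sum:
  assumes "finite L" "smooth_symbol S" "\<And>l. l \<in> L \<Longrightarrow> smooth_symbol (W l)"
  shows "ialpha (\<lambda>x \<xi>. S x \<xi> + (\<Sum>l\<in>L. c l * W l x \<xi>)) x \<xi> =
           ialpha S x \<xi> + (\<Sum>l\<in>L. c l * ialpha (W l) x \<xi>)"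
  by (simp add: ialpha_def dxi_add_sum[OF assms] algebra_simps sum.distrib sum_subtractf
      sum_distrib_left sum_divide_distrib sum.swap[where A=UNIV and B=L])

section \<open>The commutation relation between \<open>i(\<alpha>)\<close> and \<open>X\<close>\<close>

definition ialpha_coeff :: "'n::finite pt \<Rightarrow> ('n + 'n + unit) \<Rightarrow> real" where
  "ialpha_coeff x l = (case l of Inl j \<Rightarrow> x $ cp j | Inr (Inl j) \<Rightarrow> - x $ cq j | Inr (Inr _) \<Rightarrow> -1) / 2"

definition Dop_coeff :: "'n::finite pt \<Rightarrow> 'n pt \<Rightarrow> ('n + 'n + unit) \<Rightarrow> real" where
  "Dop_coeff x \<xi> a = (case a of
       Inl j \<Rightarrow> - \<xi> $ cp j + \<xi> $ ct * x $ cq j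
     | Inr (Inl j) \<Rightarrow> \<xi> $ cq j + \<xi> $ ct * x $ cp j
     | Inr (Inr _) \<Rightarrow> - Es_xi x \<xi>)"

lemma ialpha_coeff_simps [simp]:
  "ialpha_coeff x (cq j) = x $ cp j / 2"
  "ialpha_coeff x (cp j) = - x $ cq j / 2"
  "ialpha_coeff x ct = - 1 / 2"
  by (simp_all add: ialpha_coeff_def cq_def cp_def ct_def)

lemma Dop_coeff_simps [simp]:
  "Dop_coeff x \<xi> (cq j) = - \<xi> $ cp j + \<xi> $ ct * x $ cq j"
  "Dop_coeff x \<xi> (cp j) = \<xi> $ cq j + \<xi> $ ct * x $ cp j"
  "Dop_coeff x \<xi> ct = - Es_xi x \<xi>"
  by (simp_all add: Dop_coeff_def cq_def cp_def ct_def)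

lemma ialpha_eq_fibre_op: "ialpha = fibre_op ialpha_coeff"
  by (intro ext) (simp add: ialpha_def fibre_op_def sum_UNIV_coords sum_subtractf sum_negf
      sum_divide_distrib algebra_simps)

lemma Dop_eq_base_op: "Dop = base_op Dop_coeff"
  by (intro ext) (simp add: Dop_def base_op_def Es_def sum_UNIV_coords sum.distrib sum_subtractf
      sum_distrib_left algebra_simps)

lemma has_real_derivative_Dop_coeff:
  "((\<lambda>h. Dop_coeff x (\<xi> + h *\<^sub>R axis l 1) a) has_real_derivative Dop_coeff x (axis l 1) a) (at 0)"
  by (cases a rule: coord_cases) (auto simp: Es_xi_def mult.commute intro!: derivative_eq_intros)

lemma has_real_derivative_ialpha_coeff:
  "((\<lambda>h. ialpha_coeff (x + h *\<^sub>R axis a 1) l) has_real_derivative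
      ialpha_coeff (axis a 1) l - ialpha_coeff 0 l) (at 0)"
  by (cases l rule: coord_cases) (auto intro!: derivative_eq_intros)

lemma linear_Dop_coeff: "linear (\<lambda>\<xi>. Dop_coeff x \<xi> a)"
  by (rule linearI; cases a rule: coord_cases)
    (simp_all add: Es_xi_def sum.distrib sum_distrib_left algebra_simps)

lemma sum_mult_Dop_coeff_axis:
  "(\<Sum>l\<in>UNIV. c l * Dop_coeff x (axis l 1) a) = Dop_coeff x (\<chi> l. c l) a"
proof -
  have "(\<Sum>l\<in>UNIV. c l * Dop_coeff x (axis l 1) a) = Dop_coeff x (\<Sum>l\<in>UNIV. c l *\<^sub>R axis l 1) a"
    by (simp add: linear_sum[OF linear_Dop_coeff] linear_scale[OF linear_Dop_coeff])
  also have "(\<Sum>l\<in>UNIV. c l *\<^sub>R axis l 1) = (\<chi> l. c l)"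
    using basis_expansion[of "\<chi> l. c l"] by (simp add: scalar_mult_eq_scaleR)
  finally show ?thesis .
qed

lemma ialpha_coeff_Dop_coeff_cancel: "(\<Sum>l\<in>UNIV. ialpha_coeff x l * Dop_coeff x (axis l 1) a) = 0"
  unfolding sum_mult_Dop_coeff_axis
  by (cases a rule: coord_cases) (simp_all add: Es_xi_def algebra_simps)

lemma linear_ialpha_coeff_diff: "linear (\<lambda>x. ialpha_coeff x l - ialpha_coeff 0 l)"
  by (rule linearI; cases l rule: coord_cases) (simp_all add: field_simps)

lemma sum_mult_ialpha_coeff_axis:
  "(\<Sum>a\<in>UNIV. c a * (ialpha_coeff (axis a 1) l - ialpha_coeff 0 l)) =
     ialpha_coeff (\<chi> a. c a) l - ialpha_coeff 0 l"
proof -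
  have "(\<Sum>a\<in>UNIV. c a * (ialpha_coeff (axis a 1) l - ialpha_coeff 0 l)) =
          ialpha_coeff (\<Sum>a\<in>UNIV. c a *\<^sub>R axis a 1) l - ialpha_coeff 0 l"
    by (simp add: linear_sum[OF linear_ialpha_coeff_diff] linear_scale[OF linear_ialpha_coeff_diff])
  also have "(\<Sum>a\<in>UNIV. c a *\<^sub>R axis a 1) = (\<chi> a. c a)"
    using basis_expansion[of "\<chi> a. c a"] by (simp add: scalar_mult_eq_scaleR)
  finally show ?thesis .
qed

lemma Dop_coeff_transport_ialpha:
  assumes S: "S \<in> Rsp m"
  shows "(\<Sum>l\<in>UNIV. (\<Sum>a\<in>UNIV. Dop_coeff x \<xi> a * (ialpha_coeff (axis a 1) l - ialpha_coeff 0 l))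
            * dxi S l x \<xi>) = real m / 2 * S x \<xi> + \<xi> $ ct * ialpha S x \<xi>"
proof -
  define Q where "Q = (\<Sum>j\<in>UNIV. \<xi> $ cq j * dxi S (cq j) x \<xi>)"
  define P where "P = (\<Sum>j\<in>UNIV. \<xi> $ cp j * dxi S (cp j) x \<xi>)"
  define R where "R = (\<Sum>j\<in>UNIV. x $ cp j * dxi S (cq j) x \<xi> - x $ cq j * dxi S (cp j) x \<xi>)"
  have "(\<Sum>l\<in>UNIV. (\<Sum>a\<in>UNIV. Dop_coeff x \<xi> a * (ialpha_coeff (axis a 1) l - ialpha_coeff 0 l))
            * dxi S l x \<xi>) =
        (\<Sum>j\<in>UNIV. (\<xi> $ cq j + \<xi> $ ct * x $ cp j) * dxi S (cq j) x \<xi>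
                  + (\<xi> $ cp j - \<xi> $ ct * x $ cq j) * dxi S (cp j) x \<xi>) / 2"
    unfolding sum_mult_ialpha_coeff_axis
    by (simp add: sum_UNIV_coords sum.distrib sum_divide_distrib sum_distrib_right)
  also have "\<dots> = (Q + P + \<xi> $ ct * R) / 2"
    unfolding Q_def P_def R_def
    by (simp add: sum.distrib sum_subtractf sum_distrib_left algebra_simps)
  finally have "(\<Sum>l\<in>UNIV. (\<Sum>a\<in>UNIV. Dop_coeff x \<xi> a * (ialpha_coeff (axis a 1) l - ialpha_coeff 0 l))
            * dxi S l x \<xi>) = (Q + P + \<xi> $ ct * R) / 2" .
  moreover have "P = real m * S x \<xi> - \<xi> $ ct * dxi S ct x \<xi> - Q"
    using Rsp_Euler[OF S, of \<xi> x] unfolding Q_def P_def sum_UNIV_coords by simp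
  moreover have "R = 2 * ialpha S x \<xi> + dxi S ct x \<xi>"
    by (simp add: ialpha_def R_def field_simps)
  ultimately show ?thesis by (simp add: algebra_simps)
qed

lemma ialpha_Dop_commutator:
  assumes S: "S \<in> Rsp m"
  shows "ialpha (Dop S) x \<xi> = Dop (ialpha S) x \<xi> - real m / 2 * S x \<xi> - \<xi> $ ct * ialpha S x \<xi>"
proof -
  have "ialpha (Dop S) x \<xi> - Dop (ialpha S) x \<xi> =
          (\<Sum>a\<in>UNIV. (\<Sum>l\<in>UNIV. ialpha_coeff x l * Dop_coeff x (axis l 1) a) * dx S a x \<xi>)
        - (\<Sum>l\<in>UNIV. (\<Sum>a\<in>UNIV. Dop_coeff x \<xi> a * (ialpha_coeff (axis a 1) l - ialpha_coeff 0 l))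
            * dxi S l x \<xi>)"
    unfolding ialpha_eq_fibre_op Dop_eq_base_op
    by (rule fibre_op_base_op_commutator[OF S has_real_derivative_Dop_coeff
          has_real_derivative_ialpha_coeff])
  then show ?thesis
    by (simp add: ialpha_coeff_Dop_coeff_cancel Dop_coeff_transport_ialpha[OF S])
qed

lemma ialpha_mult_xi_ct:
  "smooth_symbol S \<Longrightarrow> ialpha (\<lambda>x \<xi>. \<xi> $ ct * S x \<xi>) x \<xi> = \<xi> $ ct * ialpha S x \<xi> - S x \<xi> / 2"
  by (simp add: ialpha_eq_fibre_op fibre_op_mult_xi)

lemma ialpha_Xop:
  fixes T :: "'n::finite pt \<Rightarrow> 'n pt \<Rightarrow> real"
  assumes T: "T \<in> Rsp m"
  shows "ialpha (Xop \<delta> m T) =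
           (\<lambda>x \<xi>. Xop \<delta> (m - 1) (ialpha T) x \<xi> - ((real CARD('n) + 1) * \<delta> + real m) * T x \<xi>)"
proof (intro ext)
  fix x \<xi>
  define c where "c = 2 * (real CARD('n) + 1) * \<delta> + real m"
  have T': "smooth_symbol T" using T by (rule Rsp_smooth_symbol)
  have "ialpha (Xop \<delta> m T) x \<xi> = ialpha (Dop T) x \<xi> + c * ialpha (\<lambda>x \<xi>. \<xi> $ ct * T x \<xi>) x \<xi>"
    unfolding Xop_def c_def mult.assoc
    by (intro ialpha_add_cmult Rsp_smooth_symbol[OF Rsp_Dop[OF T]] smooth_symbol_mult smooth_symbol_xi T')
  also have "\<dots> = Dop (ialpha T) x \<xi> + (c - 1) * (\<xi> $ ct * ialpha T x \<xi>)
                   - ((real CARD('n) + 1) * \<delta> + real m) * T x \<xi>"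
    by (simp add: ialpha_Dop_commutator[OF T] ialpha_mult_xi_ct[OF T'] c_def algebra_simps)
  also have "Dop (ialpha T) x \<xi> + (c - 1) * (\<xi> $ ct * ialpha T x \<xi>) = Xop \<delta> (m - 1) (ialpha T) x \<xi>"
  proof (cases m)
    case 0
    then have "ialpha T = (\<lambda>x \<xi>. 0)" using T by (simp add: ialpha_Rsp_0)
    then show ?thesis by (simp add: Dop_zero Xop_zero)
  qed (simp add: Xop_def c_def algebra_simps)
  finally show "ialpha (Xop \<delta> m T) x \<xi> =
      Xop \<delta> (m - 1) (ialpha T) x \<xi> - ((real CARD('n) + 1) * \<delta> + real m) * T x \<xi>" .
qed

section \<open>The projector \<open>p\<^sub>k\<close>\<close>

lemma Rsp_Xpow: "S \<in> Rsp m \<Longrightarrow> Xpow \<delta> m l S \<in> Rsp (m + l)"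
  by (induction l) (simp_all add: Rsp_Xop)

lemma Rsp_ialpha_pow: "S \<in> Rsp k \<Longrightarrow> (ialpha ^^ l) S \<in> Rsp (k - l)"
proof (induction l)
  case (Suc l)
  then show ?case using Rsp_ialpha[of "(ialpha ^^ l) S" "k - l"] by simp
qed simp

lemma Xpow_zero: "Xpow \<delta> m l (\<lambda>x \<xi>. 0) = (\<lambda>x \<xi>. 0)"
  by (induction l) (simp_all add: Xop_zero)

lemma ialpha_pow_zero: "(ialpha ^^ l) (\<lambda>x \<xi>. 0) = (\<lambda>x \<xi>. 0)"
  by (induction l) (simp_all add: ialpha_zero)

lemma rr_Suc:
  "rr N \<delta> (real (Suc l)) (real m) = rr N \<delta> (real l) (real m) - ((real N + 1) * \<delta> + real (m + l))"
  by (simp add: rr_def field_simps)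

lemma ialpha_Xpow:
  fixes T :: "'n::finite pt \<Rightarrow> 'n pt \<Rightarrow> real"
  assumes T: "T \<in> Rsp m" and l: "1 \<le> l"
  shows "ialpha (Xpow \<delta> m l T) = (\<lambda>x \<xi>. Xpow \<delta> (m - 1) l (ialpha T) x \<xi>
                                    + rr CARD('n) \<delta> (real l) (real m) * Xpow \<delta> m (l - 1) T x \<xi>)"
  using l
proof (induction l rule: nat_induct_at_least)
  case base
  show ?case using ialpha_Xop[OF T] by (simp add: rr_def algebra_simps)
next
  case (Suc l)
  define W where "W = Xpow \<delta> m l T"
  have W: "W \<in> Rsp (m + l)" unfolding W_def by (rule Rsp_Xpow[OF T])
  have iT: "ialpha T \<in> Rsp (m - 1)" by (rule Rsp_ialpha[OF T])
  have "ialpha (Xpow \<delta> m (Suc l) T) =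
          (\<lambda>x \<xi>. Xop \<delta> (m + l - 1) (ialpha W) x \<xi> - ((real CARD('n) + 1) * \<delta> + real (m + l)) * W x \<xi>)"
    unfolding W_def by (simp add: ialpha_Xop[OF W[unfolded W_def]])
  also have "Xop \<delta> (m + l - 1) (ialpha W) =
      (\<lambda>x \<xi>. Xop \<delta> (m + l - 1) (Xpow \<delta> (m - 1) l (ialpha T)) x \<xi>
              + rr CARD('n) \<delta> (real l) (real m) * Xop \<delta> (m + l - 1) (Xpow \<delta> m (l - 1) T) x \<xi>)"
    unfolding W_def Suc.IH
    by (rule Xop_add_cmult[OF Rsp_smooth_symbol[OF Rsp_Xpow[OF iT]] Rsp_smooth_symbol[OF Rsp_Xpow[OF T]]])
  also have "Xop \<delta> (m + l - 1) (Xpow \<delta> (m - 1) l (ialpha T)) = Xpow \<delta> (m - 1) (Suc l) (ialpha T)"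
  proof (cases m)
    case 0
    then have "ialpha T = (\<lambda>x \<xi>. 0)" using T by (simp add: ialpha_Rsp_0)
    then show ?thesis by (simp add: Xpow_zero Xop_zero)
  qed simp
  also have "Xop \<delta> (m + l - 1) (Xpow \<delta> m (l - 1) T) = W"
    using Suc.hyps unfolding W_def by (cases l) simp_all
  finally show ?case
    unfolding W_def rr_Suc by (simp add: algebra_simps)
qed

lemma rr_nonzero:
  assumes "\<delta> \<notin> {- real p / (2 * (real N + 1)) | p. k - 1 \<le> p \<and> p \<le> 2 * k - 2}"
    and j: "j \<in> {1..k}"
  shows "rr N \<delta> (real j) (real k - real j) \<noteq> 0"
proof
  assume "rr N \<delta> (real j) (real k - real j) = 0"
  with j have "2 * (real N + 1) * \<delta> + 2 * (real k - real j) + real j - 1 = 0"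
    by (simp add: rr_def)
  moreover have "real (2 * k - j - 1) = 2 * real k - real j - 1"
    using j by (simp add: of_nat_diff)
  ultimately have "\<delta> = - real (2 * k - j - 1) / (2 * (real N + 1))"
    by (simp add: field_simps)
  moreover have "k - 1 \<le> 2 * k - j - 1" "2 * k - j - 1 \<le> 2 * k - 2"
    using j by auto
  ultimately show False using assms(1) by blast
qed

lemma bb_0 [simp]: "bb N \<delta> k 0 = 1"
  by (simp add: bb_def)

lemma bb_mult_rr:
  assumes "rr N \<delta> (real l) (real k - real l) \<noteq> 0" and "1 \<le> l"
  shows "bb N \<delta> k l * rr N \<delta> (real l) (real k - real l) = - bb N \<delta> k (l - 1)"
proof -
  obtain l' where l': "l = Suc l'" using assms(2) by (cases l) auto
  show ?thesis using assms(1) unfolding bb_def l' by (simp add: prod.cl_ivl_Suc field_simps)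
qed

lemma pk_eq:
  "pk \<delta> k S = (\<lambda>x \<xi>. S x \<xi> + (\<Sum>l\<in>{1..k}. bb CARD('n) \<delta> k l * Xpow \<delta> (k - l) l ((ialpha ^^ l) S) x \<xi>))"
  for S :: "'n::finite pt \<Rightarrow> 'n pt \<Rightarrow> real"
  by (intro ext) (simp add: pk_def)

lemma pk_ialpha_kernel: "ialpha T = (\<lambda>x \<xi>. 0) \<Longrightarrow> pk \<delta> k T = T"
proof -
  assume "ialpha T = (\<lambda>x \<xi>. 0)"
  then have "(ialpha ^^ l) T = (\<lambda>x \<xi>. 0)" if "1 \<le> l" for l
    using that by (cases l) (simp_all add: funpow_Suc_right ialpha_pow_zero del: funpow.simps)
  then show ?thesis unfolding pk_eq by (simp add: Xpow_zero)
qed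

lemma Rsp_Xpow_ialpha_pow: "S \<in> Rsp k \<Longrightarrow> l \<le> k \<Longrightarrow> Xpow \<delta> (k - l) l ((ialpha ^^ l) S) \<in> Rsp k"
  using Rsp_Xpow[OF Rsp_ialpha_pow[of S k l], of \<delta> l] by simp

lemma Rsp_pk: "S \<in> Rsp k \<Longrightarrow> pk \<delta> k S \<in> Rsp k"
  unfolding pk_eq by (intro Rsp_add Rsp_sum Rsp_cmult Rsp_Xpow_ialpha_pow) auto

lemma ialpha_pk:
  fixes S :: "'n::finite pt \<Rightarrow> 'n pt \<Rightarrow> real"
  assumes S: "S \<in> Rsp k" and nz: "\<forall>j\<in>{1..k}. rr CARD('n) \<delta> (real j) (real k - real j) \<noteq> 0"
  shows "ialpha (pk \<delta> k S) = (\<lambda>x \<xi>. 0)"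
proof (intro ext)
  fix x \<xi>
  define W where "W l = Xpow \<delta> (k - l) l ((ialpha ^^ l) S)" for l
  define u where "u l = bb CARD('n) \<delta> k l * Xpow \<delta> (k - l - 1) l ((ialpha ^^ Suc l) S) x \<xi>" for l
  have "W l \<in> Rsp k" if "l \<in> {1..k}" for l
    using that unfolding W_def by (simp add: Rsp_Xpow_ialpha_pow[OF S])
  then have "ialpha (pk \<delta> k S) x \<xi> = ialpha S x \<xi> + (\<Sum>l\<in>{1..k}. bb CARD('n) \<delta> k l * ialpha (W l) x \<xi>)"
    unfolding pk_eq W_def[symmetric] using S
    by (intro ialpha_add_sum) (auto intro: Rsp_smooth_symbol)
  also have "(\<Sum>l\<in>{1..k}. bb CARD('n) \<delta> k l * ialpha (W l) x \<xi>) = (\<Sum>l\<in>{1..k}. u l - u (l - 1))"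
  proof (intro sum.cong refl)
    fix l assume l: "l \<in> {1..k}"
    have "ialpha (W l) x \<xi> = Xpow \<delta> (k - l - 1) l ((ialpha ^^ Suc l) S) x \<xi>
        + rr CARD('n) \<delta> (real l) (real k - real l) * Xpow \<delta> (k - l) (l - 1) ((ialpha ^^ l) S) x \<xi>"
      using l unfolding W_def by (simp add: ialpha_Xpow[OF Rsp_ialpha_pow[OF S]] of_nat_diff)
    moreover have "u (l - 1) = bb CARD('n) \<delta> k (l - 1) * Xpow \<delta> (k - l) (l - 1) ((ialpha ^^ l) S) x \<xi>"
      using l by (simp add: u_def Suc_diff_le)
    ultimately show "bb CARD('n) \<delta> k l * ialpha (W l) x \<xi> = u l - u (l - 1)"
      using bb_mult_rr[of "CARD('n)" \<delta> l k] nz l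
      by (simp add: u_def distrib_left mult.assoc[symmetric])
  qed
  also have "\<dots> = u k - u 0"
    using sum_telescope''[of 0 k u] by simp
  also have "u k = 0"
  proof -
    have "(ialpha ^^ k) S \<in> Rsp 0" using Rsp_ialpha_pow[OF S, of k] by simp
    then show ?thesis by (simp add: u_def ialpha_Rsp_0 Xpow_zero)
  qed
  also have "u 0 = ialpha S x \<xi>" by (simp add: u_def)
  finally show "ialpha (pk \<delta> k S) x \<xi> = 0" by simp
qed

lemma pk_image_Rsp:
  fixes \<delta> :: real
  assumes "\<forall>j\<in>{1..k}. rr CARD('n::finite) \<delta> (real j) (real k - real j) \<noteq> 0"
  shows "pk \<delta> k ` (Rsp k :: ('n pt \<Rightarrow> 'n pt \<Rightarrow> real) set) = {S \<in> Rsp k. ialpha S = (\<lambda>x \<xi>. 0)}"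
proof
  show "pk \<delta> k ` (Rsp k :: ('n pt \<Rightarrow> 'n pt \<Rightarrow> real) set) \<subseteq> {S \<in> Rsp k. ialpha S = (\<lambda>x \<xi>. 0)}"
    unfolding image_subset_iff by (simp add: ialpha_pk[OF _ assms] Rsp_pk)
  show "{S \<in> Rsp k. ialpha S = (\<lambda>x \<xi>. 0)} \<subseteq> pk \<delta> k ` (Rsp k :: ('n pt \<Rightarrow> 'n pt \<Rightarrow> real) set)"
  proof
    fix S :: "'n pt \<Rightarrow> 'n pt \<Rightarrow> real"
    assume S: "S \<in> {S \<in> Rsp k. ialpha S = (\<lambda>x \<xi>. 0)}"
    then have "S = pk \<delta> k S" by (simp add: pk_ialpha_kernel)
    with S show "S \<in> pk \<delta> k ` Rsp k" by (simp add: rev_image_eqI)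
  qed
qed

theorem proposition5p1:
  fixes \<delta> :: real and k :: nat
  assumes "k \<ge> 1"
    and "\<delta> \<notin> {- real p / (2 * (real CARD('n::finite) + 1)) | p. k - 1 \<le> p \<and> p \<le> 2 * k - 2}"
  shows "(\<forall>j\<in>{1..k}. rr CARD('n) \<delta> (real j) (real k - real j) \<noteq> 0)
       \<and> (\<forall>S\<in>(Rsp k :: ('n pt \<Rightarrow> 'n pt \<Rightarrow> real) set). pk \<delta> k S \<in> Rsp k)
       \<and> (\<forall>S\<in>(Rsp k :: ('n pt \<Rightarrow> 'n pt \<Rightarrow> real) set). pk \<delta> k (pk \<delta> k S) = pk \<delta> k S)
       \<and> pk \<delta> k ` (Rsp k :: ('n pt \<Rightarrow> 'n pt \<Rightarrow> real) set) = {S \<in> Rsp k. ialpha S = (\<lambda>x \<xi>. 0)}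
       \<and> (\<forall>S\<in>(Rsp k :: ('n pt \<Rightarrow> 'n pt \<Rightarrow> real) set). ialpha (pk \<delta> k S) = (\<lambda>x \<xi>. 0))"
proof -
  have nonzero: "\<forall>j\<in>{1..k}. rr CARD('n) \<delta> (real j) (real k - real j) \<noteq> 0"
    using rr_nonzero[OF assms(2)] by blast
  have kernel: "\<forall>S\<in>(Rsp k :: ('n pt \<Rightarrow> 'n pt \<Rightarrow> real) set). ialpha (pk \<delta> k S) = (\<lambda>x \<xi>. 0)"
    using ialpha_pk nonzero by blast
  then have "\<forall>S\<in>(Rsp k :: ('n pt \<Rightarrow> 'n pt \<Rightarrow> real) set). pk \<delta> k (pk \<delta> k S) = pk \<delta> k S"
    using pk_ialpha_kernel by blast
  with nonzero kernel show ?thesis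
    using Rsp_pk pk_image_Rsp[OF nonzero] by blast
qed

end
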